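(* Let $(M,\circ)$ be a fuzzy $\Gamma$-hypersemigroup. Then (i) $\chi_M$ is a left fuzzy $\Gamma$-hyperideal of $(M,\circ)$; (ii) $\chi_M\circ\gamma\circ m=M\circ\gamma\circ m$ for all $m\in M$, $\gamma\in\Gamma$; (iii) $M\circ\gamma\circ m$ is a left fuzzy $\Gamma$-hyperideal of $(M,\circ)$ for all $m\in M$, $\gamma\in\Gamma$; (iv) for any fuzzy subset $\mu\ne0$ of $M$, $\chi_M\circ\gamma\circ\mu$ is a left fuzzy $\Gamma$-hyperideal of $(M,\circ)$ for all $\gamma\in\Gamma$.
   Context: $M,\Gamma$ are nonempty sets; a fuzzy subset of $M$ is a map $M\to[0,1]$. A fuzzy $\Gamma$-hyperoperation assigns to each $(a,\gamma,b)\in M\times\Gamma\times M$ a fuzzy subset $a\circ\gamma\circ b$. For $a\in M$ and fuzzy $\mu$: $(a\circ\gamma\circ\mu)(r)=\bigvee_{t\in M}((a\circ\gamma\circ t)(r)\wedge\mu(t))$ if $\mu\ne0$, else $0$; $(\mu\circ\gamma\circ a)(r)=\bigvee_{t\in M}(\mu(t)\wedge(t\circ\gamma\circ a)(r))$ if $\mu\ne0$, else $0$. For fuzzy $\mu,\nu$: $(\mu\circ\gamma\circ\nu)(t)=\bigvee_{p,q\in M}(\mu(p)\wedge(p\circ\gamma\circ q)(t)\wedge\nu(q))$. $(M,\circ)$ is a fuzzy $\Gamma$-hypersemigroup if $(a\circ\alpha\circ b)\circ\beta\circ c=a\circ\alpha\circ(b\circ\beta\circ c)$ for all $a,b,c\in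 M$, $\alpha,\beta\in\Gamma$. $\chi_M$ is the constant function $1$ on $M$. $M\circ\gamma\circ m$ denotes the fuzzy subset $t\mapsto\bigvee_{p\in M}(p\circ\gamma\circ m)(t)$. For fuzzy sets, $\mu\subseteq\nu$ means $\mu(x)\le\nu(x)$ for all $x$. A fuzzy subset $\mu$ is a left fuzzy $\Gamma$-hyperideal if $a\circ\gamma\circ\mu\subseteq\mu$ for all $a\in M$, $\gamma\in\Gamma$. *)

theory Defs
  imports Complex_Main
begin

text \<open>Fuzzy subsets of a carrier M are modelled as functions 'a => real with values in
[0,1] on M (values outside M are irrelevant). Suprema over M are real suprema (M nonempty,
values bounded in [0,1]).\<close>

definition fuzzy_subset :: "'a set \<Rightarrow> ('a \<Rightarrow> real) \<Rightarrow> bool" where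
  "fuzzy_subset M \<mu> \<longleftrightarrow> (\<forall>x\<in>M. 0 \<le> \<mu> x \<and> \<mu> x \<le> 1)"

definition fuzzy_zero :: "'a set \<Rightarrow> ('a \<Rightarrow> real) \<Rightarrow> bool" where
  "fuzzy_zero M \<mu> \<longleftrightarrow> (\<forall>x\<in>M. \<mu> x = 0)"

definition fuzzy_le :: "'a set \<Rightarrow> ('a \<Rightarrow> real) \<Rightarrow> ('a \<Rightarrow> real) \<Rightarrow> bool" where
  "fuzzy_le M \<mu> \<nu> \<longleftrightarrow> (\<forall>x\<in>M. \<mu> x \<le> \<nu> x)"

definition fuzzy_eq :: "'a set \<Rightarrow> ('a \<Rightarrow> real) \<Rightarrow> ('a \<Rightarrow> real) \<Rightarrow> bool" where
  "fuzzy_eq M \<mu> \<nu> \<longleftrightarrow> (\<forall>x\<in>M. \<mu> x = \<nu> x)"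

definition fuzzy_Gamma_hyperop :: "'a set \<Rightarrow> 'g set \<Rightarrow> ('a \<Rightarrow> 'g \<Rightarrow> 'a \<Rightarrow> 'a \<Rightarrow> real) \<Rightarrow> bool" where
  "fuzzy_Gamma_hyperop M \<Gamma> hop \<longleftrightarrow> (\<forall>a\<in>M. \<forall>g\<in>\<Gamma>. \<forall>b\<in>M. fuzzy_subset M (hop a g b))"

definition elem_fuzzy :: "'a set \<Rightarrow> ('a \<Rightarrow> 'g \<Rightarrow> 'a \<Rightarrow> 'a \<Rightarrow> real) \<Rightarrow> 'a \<Rightarrow> 'g \<Rightarrow> ('a \<Rightarrow> real) \<Rightarrow> 'a \<Rightarrow> real" where
  "elem_fuzzy M hop a g \<mu> = (\<lambda>r. if fuzzy_zero M \<mu> then 0 else (SUP t\<in>M. min (hop a g t r) (\<mu> t)))"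

definition fuzzy_elem :: "'a set \<Rightarrow> ('a \<Rightarrow> 'g \<Rightarrow> 'a \<Rightarrow> 'a \<Rightarrow> real) \<Rightarrow> ('a \<Rightarrow> real) \<Rightarrow> 'g \<Rightarrow> 'a \<Rightarrow> 'a \<Rightarrow> real" where
  "fuzzy_elem M hop \<mu> g a = (\<lambda>r. if fuzzy_zero M \<mu> then 0 else (SUP t\<in>M. min (\<mu> t) (hop t g a r)))"

definition fuzzy_fuzzy :: "'a set \<Rightarrow> ('a \<Rightarrow> 'g \<Rightarrow> 'a \<Rightarrow> 'a \<Rightarrow> real) \<Rightarrow> ('a \<Rightarrow> real) \<Rightarrow> 'g \<Rightarrow> ('a \<Rightarrow> real) \<Rightarrow> 'a \<Rightarrow> real" where
  "fuzzy_fuzzy M hop \<mu> g \<nu> = (\<lambda>t. SUP pq\<in>M \<times> M. min (min (\<mu> (fst pq)) (hop (fst pq) g (snd pq) t)) (\<nu> (snd pq)))"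

definition M_elem :: "'a set \<Rightarrow> ('a \<Rightarrow> 'g \<Rightarrow> 'a \<Rightarrow> 'a \<Rightarrow> real) \<Rightarrow> 'g \<Rightarrow> 'a \<Rightarrow> 'a \<Rightarrow> real" where
  "M_elem M hop g m = (\<lambda>t. SUP p\<in>M. hop p g m t)"

definition chi :: "'a set \<Rightarrow> 'a \<Rightarrow> real" where
  "chi M = (\<lambda>x. 1)"

definition fuzzy_Gamma_hypersemigroup :: "'a set \<Rightarrow> 'g set \<Rightarrow> ('a \<Rightarrow> 'g \<Rightarrow> 'a \<Rightarrow> 'a \<Rightarrow> real) \<Rightarrow> bool" where
  "fuzzy_Gamma_hypersemigroup M \<Gamma> hop \<longleftrightarrow> M \<noteq> {} \<and> \<Gamma> \<noteq> {} \<and> fuzzy_Gamma_hyperop M \<Gamma> hop \<and>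
     (\<forall>a\<in>M. \<forall>b\<in>M. \<forall>c\<in>M. \<forall>\<alpha>\<in>\<Gamma>. \<forall>\<beta>\<in>\<Gamma>.
        fuzzy_eq M (fuzzy_elem M hop (hop a \<alpha> b) \<beta> c) (elem_fuzzy M hop a \<alpha> (hop b \<beta> c)))"

definition left_fuzzy_Gamma_hyperideal :: "'a set \<Rightarrow> 'g set \<Rightarrow> ('a \<Rightarrow> 'g \<Rightarrow> 'a \<Rightarrow> 'a \<Rightarrow> real) \<Rightarrow> ('a \<Rightarrow> real) \<Rightarrow> bool" where
  "left_fuzzy_Gamma_hyperideal M \<Gamma> hop \<mu> \<longleftrightarrow> fuzzy_subset M \<mu> \<and>
     (\<forall>a\<in>M. \<forall>g\<in>\<Gamma>. fuzzy_le M (elem_fuzzy M hop a g \<mu>) \<mu>)"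

end

theory Submission
  imports Defs
begin

text \<open>The whole theorem rests on associativity in the form
  \<open>a \<circ> \<alpha> \<circ> (p \<circ> \<beta> \<circ> q) = (a \<circ> \<alpha> \<circ> p) \<circ> \<beta> \<circ> q\<close>: every element reached from a point of
  \<open>p \<circ> \<beta> \<circ> q\<close> by left multiplication already lies in \<open>M \<circ> \<beta> \<circ> q\<close> with at least the same
  degree. Hence \<open>M \<circ> \<beta> \<circ> q\<close> absorbs left multiplication, and so does \<open>\<chi>\<^sub>M \<circ> \<gamma> \<circ> \<mu>\<close>, whose
  value at \<open>r\<close> is the supremum over \<open>q\<close> of \<open>min ((M \<circ> \<gamma> \<circ> q) r) (\<mu> q)\<close>.\<close>

lemma min_cSUP_le:
  fixes f :: "'i \<Rightarrow> real"
  assumes "I \<noteq> {}" "\<And>i. i \<in> I \<Longrightarrow> min (f i) c \<le> S"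
  shows "min (SUP i\<in>I. f i) c \<le> S"
proof (cases "c \<le> S")
  case False
  then have "\<And>i. i \<in> I \<Longrightarrow> f i \<le> S" using assms(2) by fastforce
  then have "(SUP i\<in>I. f i) \<le> S" using assms(1) by (intro cSUP_least) auto
  then show ?thesis by simp
qed simp

lemma le_cSUP_bounded:
  fixes f :: "'i \<Rightarrow> real"
  assumes "i \<in> I" "\<And>j. j \<in> I \<Longrightarrow> f j \<le> B" "x \<le> f i"
  shows "x \<le> (SUP j\<in>I. f j)"
proof -
  have "bdd_above (f ` I)" using assms(2) by (intro bdd_aboveI2)
  then show ?thesis using assms(1,3) by (rule cSUP_upper2)
qed

lemma left_fuzzy_Gamma_hyperidealI:
  assumes "M \<noteq> {}" "fuzzy_subset M \<nu>"
    and "\<And>a \<alpha> t r. a \<in> M \<Longrightarrow> \<alpha> \<in> \<Gamma> \<Longrightarrow> t \<in> M \<Longrightarrow> r \<in> M \<Longrightarrow> min (hop a \<alpha> t r) (\<nu> t) \<le> \<nu> r"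
  shows "left_fuzzy_Gamma_hyperideal M \<Gamma> hop \<nu>"
  unfolding left_fuzzy_Gamma_hyperideal_def fuzzy_le_def elem_fuzzy_def
  using assms by (auto simp: fuzzy_subset_def intro!: cSUP_least)

context
  fixes M :: "'a set" and \<Gamma> :: "'g set" and hop :: "'a \<Rightarrow> 'g \<Rightarrow> 'a \<Rightarrow> 'a \<Rightarrow> real"
  assumes hypersemigroup: "fuzzy_Gamma_hypersemigroup M \<Gamma> hop"
begin

lemma carrier_nonempty: "M \<noteq> {}"
  using hypersemigroup unfolding fuzzy_Gamma_hypersemigroup_def by blast

lemma hop_bounds:
  "\<lbrakk>a \<in> M; \<alpha> \<in> \<Gamma>; b \<in> M; r \<in> M\<rbrakk> \<Longrightarrow> 0 \<le> hop a \<alpha> b r \<and> hop a \<alpha> b r \<le> 1"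
  using hypersemigroup
  unfolding fuzzy_Gamma_hypersemigroup_def fuzzy_Gamma_hyperop_def fuzzy_subset_def by blast

lemma hop_assoc:
  "\<lbrakk>a \<in> M; b \<in> M; c \<in> M; \<alpha> \<in> \<Gamma>; \<beta> \<in> \<Gamma>; r \<in> M\<rbrakk> \<Longrightarrow>
     fuzzy_elem M hop (hop a \<alpha> b) \<beta> c r = elem_fuzzy M hop a \<alpha> (hop b \<beta> c) r"
  using hypersemigroup unfolding fuzzy_Gamma_hypersemigroup_def fuzzy_eq_def by blast

lemma chi_not_fuzzy_zero: "\<not> fuzzy_zero M (chi M)"
  using carrier_nonempty unfolding fuzzy_zero_def chi_def by auto

lemma left_fuzzy_Gamma_hyperideal_chi: "left_fuzzy_Gamma_hyperideal M \<Gamma> hop (chi M)"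
  by (rule left_fuzzy_Gamma_hyperidealI[OF carrier_nonempty])
     (auto simp: fuzzy_subset_def chi_def)

lemma fuzzy_elem_chi_eq_M_elem:
  assumes "m \<in> M" "\<gamma> \<in> \<Gamma>"
  shows "fuzzy_eq M (fuzzy_elem M hop (chi M) \<gamma> m) (M_elem M hop \<gamma> m)"
  unfolding fuzzy_eq_def fuzzy_elem_def M_elem_def
  using chi_not_fuzzy_zero hop_bounds assms by (auto simp: chi_def intro!: SUP_cong)

lemma M_elem_bounds:
  assumes "m \<in> M" "\<gamma> \<in> \<Gamma>" "r \<in> M"
  shows "0 \<le> M_elem M hop \<gamma> m r \<and> M_elem M hop \<gamma> m r \<le> 1"
proof
  obtain p where "p \<in> M" using carrier_nonempty by blast
  then show "0 \<le> M_elem M hop \<gamma> m r"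
    unfolding M_elem_def using hop_bounds assms by (intro le_cSUP_bounded[where B = 1]) auto
  show "M_elem M hop \<gamma> m r \<le> 1"
    unfolding M_elem_def using carrier_nonempty hop_bounds assms by (intro cSUP_least) auto
qed

lemma hop_le_M_elem:
  assumes "s \<in> M" "q \<in> M" "\<beta> \<in> \<Gamma>" "r \<in> M"
  shows "hop s \<beta> q r \<le> M_elem M hop \<beta> q r"
  unfolding M_elem_def using assms hop_bounds by (intro le_cSUP_bounded[where B = 1]) auto

lemma fuzzy_elem_le_M_elem:
  assumes "q \<in> M" "\<beta> \<in> \<Gamma>" "r \<in> M"
  shows "fuzzy_elem M hop \<nu> \<beta> q r \<le> M_elem M hop \<beta> q r"
  unfolding fuzzy_elem_def using carrier_nonempty assms M_elem_bounds hop_le_M_elem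
  by (auto intro!: cSUP_least min.coboundedI2)

lemma hop_absorbed_by_M_elem:
  assumes "a \<in> M" "p \<in> M" "q \<in> M" "t \<in> M" "r \<in> M" "\<alpha> \<in> \<Gamma>" "\<beta> \<in> \<Gamma>"
  shows "min (hop a \<alpha> t r) (hop p \<beta> q t) \<le> M_elem M hop \<beta> q r"
proof (cases "fuzzy_zero M (hop p \<beta> q)")
  case True
  then show ?thesis using assms M_elem_bounds[of q \<beta> r] by (auto simp: fuzzy_zero_def)
next
  case False
  have "min (hop a \<alpha> t r) (hop p \<beta> q t) \<le> (SUP t'\<in>M. min (hop a \<alpha> t' r) (hop p \<beta> q t'))"
    using assms hop_bounds by (intro le_cSUP_bounded[where i = t and B = 1]) (auto intro: min.coboundedI1)
  also have "\<dots> = elem_fuzzy M hop a \<alpha> (hop p \<beta> q) r"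
    unfolding elem_fuzzy_def using False by simp
  also have "\<dots> = fuzzy_elem M hop (hop a \<alpha> p) \<beta> q r"
    using hop_assoc assms by simp
  also have "\<dots> \<le> M_elem M hop \<beta> q r"
    using fuzzy_elem_le_M_elem assms by simp
  finally show ?thesis .
qed

lemma left_fuzzy_Gamma_hyperideal_M_elem:
  assumes "m \<in> M" "\<gamma> \<in> \<Gamma>"
  shows "left_fuzzy_Gamma_hyperideal M \<Gamma> hop (M_elem M hop \<gamma> m)"
proof (rule left_fuzzy_Gamma_hyperidealI[OF carrier_nonempty])
  show "fuzzy_subset M (M_elem M hop \<gamma> m)"
    using M_elem_bounds assms by (simp add: fuzzy_subset_def)
  fix a \<alpha> t r assume "a \<in> M" "\<alpha> \<in> \<Gamma>" "t \<in> M" "r \<in> M"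
  then have "min (M_elem M hop \<gamma> m t) (hop a \<alpha> t r) \<le> M_elem M hop \<gamma> m r"
    unfolding M_elem_def[of M hop \<gamma> m, THEN fun_cong[of _ _ t]]
    using hop_absorbed_by_M_elem assms
    by (intro min_cSUP_le[OF carrier_nonempty]) (metis min.commute)
  then show "min (hop a \<alpha> t r) (M_elem M hop \<gamma> m t) \<le> M_elem M hop \<gamma> m r"
    by (simp add: min.commute)
qed

text \<open>Unlike \<open>elem_fuzzy\<close>, \<open>fuzzy_fuzzy\<close> has no special case for the zero fuzzy set.\<close>

context
  fixes \<mu> :: "'a \<Rightarrow> real" and \<gamma> :: 'g
  assumes fuzzy_\<mu>: "fuzzy_subset M \<mu>" and \<gamma>: "\<gamma> \<in> \<Gamma>"
begin

lemma hop_min_le_chi_fuzzy: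
  assumes "s \<in> M" "q \<in> M" "r \<in> M"
  shows "min (hop s \<gamma> q r) (\<mu> q) \<le> fuzzy_fuzzy M hop (chi M) \<gamma> \<mu> r"
  unfolding fuzzy_fuzzy_def using assms hop_bounds \<gamma> fuzzy_\<mu>
  by (intro le_cSUP_bounded[where i = "(s, q)" and B = 1])
     (auto simp: chi_def fuzzy_subset_def min_def)

lemma fuzzy_subset_chi_fuzzy: "fuzzy_subset M (fuzzy_fuzzy M hop (chi M) \<gamma> \<mu>)"
  unfolding fuzzy_subset_def
proof (intro ballI conjI)
  fix r assume r: "r \<in> M"
  obtain p where p: "p \<in> M" using carrier_nonempty by blast
  have "0 \<le> min (hop p \<gamma> p r) (\<mu> p)"
    using hop_bounds p \<gamma> r fuzzy_\<mu> by (simp add: fuzzy_subset_def)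
  then show "0 \<le> fuzzy_fuzzy M hop (chi M) \<gamma> \<mu> r"
    using hop_min_le_chi_fuzzy[OF p p r] by linarith
  show "fuzzy_fuzzy M hop (chi M) \<gamma> \<mu> r \<le> 1"
    unfolding fuzzy_fuzzy_def using carrier_nonempty hop_bounds \<gamma> r fuzzy_\<mu>
    by (intro cSUP_least) (auto simp: chi_def fuzzy_subset_def)
qed

lemma M_elem_min_le_chi_fuzzy:
  assumes "q \<in> M" "r \<in> M"
  shows "min (M_elem M hop \<gamma> q r) (\<mu> q) \<le> fuzzy_fuzzy M hop (chi M) \<gamma> \<mu> r"
  unfolding M_elem_def using hop_min_le_chi_fuzzy assms
  by (intro min_cSUP_le[OF carrier_nonempty]) auto

lemma left_fuzzy_Gamma_hyperideal_chi_fuzzy: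
  "left_fuzzy_Gamma_hyperideal M \<Gamma> hop (fuzzy_fuzzy M hop (chi M) \<gamma> \<mu>)"
proof (rule left_fuzzy_Gamma_hyperidealI[OF carrier_nonempty fuzzy_subset_chi_fuzzy])
  let ?N = "fuzzy_fuzzy M hop (chi M) \<gamma> \<mu>"
  fix a \<alpha> t r assume a: "a \<in> M" and \<alpha>: "\<alpha> \<in> \<Gamma>" and t: "t \<in> M" and r: "r \<in> M"
  have "min (min (min (chi M p) (hop p \<gamma> q t)) (\<mu> q)) (hop a \<alpha> t r) \<le> ?N r"
    if p: "p \<in> M" and q: "q \<in> M" for p q
  proof -
    have "min (hop a \<alpha> t r) (hop p \<gamma> q t) \<le> M_elem M hop \<gamma> q r"
      using hop_absorbed_by_M_elem a p q t r \<alpha> \<gamma> by blast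
    then have "min (min (hop a \<alpha> t r) (hop p \<gamma> q t)) (\<mu> q) \<le> ?N r"
      using M_elem_min_le_chi_fuzzy[OF q r] by linarith
    then show ?thesis by (simp add: chi_def min.commute min.left_commute)
  qed
  then have "min (?N t) (hop a \<alpha> t r) \<le> ?N r"
    unfolding fuzzy_fuzzy_def[of M hop "chi M" \<gamma> \<mu>, THEN fun_cong[of _ _ t]]
    using carrier_nonempty by (intro min_cSUP_le) auto
  then show "min (hop a \<alpha> t r) (?N t) \<le> ?N r" by (simp add: min.commute)
qed

end

end

theorem theorem4p6:
  assumes "fuzzy_Gamma_hypersemigroup M \<Gamma> hop"
  shows "left_fuzzy_Gamma_hyperideal M \<Gamma> hop (chi M) \<and>
    (\<forall>m\<in>M. \<forall>\<gamma>\<in>\<Gamma>. fuzzy_eq M (fuzzy_elem M hop (chi M) \<gamma> m) (M_elem M hop \<gamma> m)) \<and>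
    (\<forall>m\<in>M. \<forall>\<gamma>\<in>\<Gamma>. left_fuzzy_Gamma_hyperideal M \<Gamma> hop (M_elem M hop \<gamma> m)) \<and>
    (\<forall>\<mu> \<gamma>. fuzzy_subset M \<mu> \<and> \<not> fuzzy_zero M \<mu> \<and> \<gamma> \<in> \<Gamma> \<longrightarrow>
           left_fuzzy_Gamma_hyperideal M \<Gamma> hop (fuzzy_fuzzy M hop (chi M) \<gamma> \<mu>))"
  using left_fuzzy_Gamma_hyperideal_chi[OF assms] fuzzy_elem_chi_eq_M_elem[OF assms]
    left_fuzzy_Gamma_hyperideal_M_elem[OF assms] left_fuzzy_Gamma_hyperideal_chi_fuzzy[OF assms]
  by blast

end
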